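(* Let $n\ge2$ and let $g\ge0$ be an integer with $\gcd(n,g)=1$. Then: (i) $\det g\text{-}circ(F_1,\dots,F_n)=\det Q_g\cdot\left[(1-F_{n+1})^{n-1}+F_n^{n-2}\sum_{i=1}^{n-1}F_i\left(\frac{1-F_{n+1}}{F_n}\right)^{i-1}\right]$; (ii) $\det g\text{-}circ(L_1,\dots,L_n)=\det Q_g\cdot\left[(1-L_{n+1})^{n-1}+(L_n-2)^{n-2}\sum_{i=1}^{n-1}(L_{i+2}-3L_{i+1})\left(\frac{1-L_{n+1}}{L_n-2}\right)^{i-1}\right]$; (iii) $\det g\text{-}circ(P_1,\dots,P_n)=\det Q_g\cdot\left[(1-P_{n+1})^{n-1}+P_n^{n-2}\sum_{i=1}^{n-1}P_i\left(\frac{1-P_{n+1}}{P_n}\right)^{i-1}\right]$; (iv) $\det g\text{-}circ(J_1,\dots,J_n)=\det Q_g\cdot\left[(1-J_{n+1})^{n-1}+2^{n-1}J_n^{n-2}\sum_{i=1}^{n-1}J_i\left(\frac{1-J_{n+1}}{2J_n}\right)^{i-1}\right]$.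
   Context: Fibonacci: $F_0=0,F_1=1,F_{m+2}=F_{m+1}+F_m$. Lucas: $L_0=2,L_1=1,L_{m+2}=L_{m+1}+L_m$. Pell: $P_0=0,P_1=1,P_{m+2}=2P_{m+1}+P_m$. Jacobsthal: $J_0=0,J_1=1,J_{m+2}=J_{m+1}+2J_m$. For $n\ge1$, an integer $g\ge 0$ and numbers $a_0,\dots,a_{n-1}$, the $g$-circulant matrix $g\text{-}circ(a_0,\dots,a_{n-1})$ is the $n\times n$ matrix whose $(i,j)$ entry ($0\le i,j\le n-1$) is $a_{(j-ig)\bmod n}$. $Q_g:=g\text{-}circ(1,0,\dots,0)$, i.e. the $n\times n$ matrix whose $(i,j)$ entry is $1$ if $j\equiv ig \pmod n$ and $0$ otherwise. *)

theory Defs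
  imports "Jordan_Normal_Form.Determinant"
begin

fun fibo :: "nat \<Rightarrow> real" where
  "fibo 0 = 0" | "fibo (Suc 0) = 1" | "fibo (Suc (Suc m)) = fibo (Suc m) + fibo m"

fun lucas :: "nat \<Rightarrow> real" where
  "lucas 0 = 2" | "lucas (Suc 0) = 1" | "lucas (Suc (Suc m)) = lucas (Suc m) + lucas m"

fun pell :: "nat \<Rightarrow> real" where
  "pell 0 = 0" | "pell (Suc 0) = 1" | "pell (Suc (Suc m)) = 2 * pell (Suc m) + pell m"

fun jacobsthal :: "nat \<Rightarrow> real" where
  "jacobsthal 0 = 0" | "jacobsthal (Suc 0) = 1"
| "jacobsthal (Suc (Suc m)) = jacobsthal (Suc m) + 2 * jacobsthal m"

definition gcirc :: "nat \<Rightarrow> nat \<Rightarrow> (nat \<Rightarrow> real) \<Rightarrow> real mat" where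
  "gcirc n g a = mat n n (\<lambda>(i, j). a (nat ((int j - int i * int g) mod int n)))"

definition Qg :: "nat \<Rightarrow> nat \<Rightarrow> real mat" where
  "Qg n g = gcirc n g (\<lambda>k. if k = 0 then 1 else 0)"

end

theory Submission
  imports Defs
begin

(*
  Row i of Q_g is the unit vector at i g mod n, so Q_g times the ordinary circulant is the
  g-circulant and det g-circ = det Q_g * det circ for every g (coprimality only makes the
  first factor a sign).  For the circulant of a sequence with x_1 = 1 and
  x_{k+2} = p x_{k+1} + q x_k, subtracting p and q times the next two rows from each of the
  first n - 2 rows leaves only the entries where the recurrence window wraps around:
  alpha = 1 - x_{n+1} on the diagonal and -gamma on the superdiagonal.  After one more row
  operation clears the last column, unipotent column operations with ratio gamma / alpha make
  the matrix lower triangular, and its diagonal product is the stated sum.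
*)

lemma index_mult_mat_supported:
  assumes "dim_row B = dim_col A" "i < dim_row A" "j < dim_col B" "S \<subseteq> {0..<dim_col A}"
    and "\<And>k. k < dim_col A \<Longrightarrow> k \<notin> S \<Longrightarrow> A $$ (i, k) * B $$ (k, j) = 0"
  shows "(A * B) $$ (i, j) = (\<Sum>k\<in>S. A $$ (i, k) * B $$ (k, j))"
proof -
  have "(A * B) $$ (i, j) = (\<Sum>k\<in>{0..<dim_col A}. A $$ (i, k) * B $$ (k, j))"
    using assms(1-3) by (simp add: scalar_prod_def)
  also have "\<dots> = (\<Sum>k\<in>S. A $$ (i, k) * B $$ (k, j))"
    using assms(4,5) by (intro sum.mono_neutral_right) auto
  finally show ?thesis .
qed

lemma det_unit_upper_triangular:
  fixes A :: "'a :: comm_ring_1 mat"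
  assumes "A \<in> carrier_mat n n" "\<And>i j. j < i \<Longrightarrow> i < n \<Longrightarrow> A $$ (i, j) = 0"
    and "\<And>i. i < n \<Longrightarrow> A $$ (i, i) = 1"
  shows "det A = 1"
proof -
  have "upper_triangular A" using assms(1,2) by (auto simp: upper_triangular_def)
  then show ?thesis
    using assms(1,3) by (simp add: det_upper_triangular[of _ n] prod_list_diag_prod)
qed

lemma power_mult_divide_power:
  fixes a b :: "'a :: field"
  assumes "a \<noteq> 0" "k \<le> m"
  shows "a ^ m * (b / a) ^ (m - k) = a ^ k * b ^ (m - k)"
proof -
  have "a ^ m = a ^ k * a ^ (m - k)" using assms(2) by (simp flip: power_add)
  then show ?thesis using assms(1) by (simp add: power_divide)
qed

lemma dim_gcirc [simp]: "dim_row (gcirc n g a) = n" "dim_col (gcirc n g a) = n"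
  by (simp_all add: gcirc_def)

lemma dim_Qg [simp]: "dim_row (Qg n g) = n" "dim_col (Qg n g) = n"
  by (simp_all add: Qg_def)

lemma gcirc_1_index:
  assumes "i < n" "j < n"
  shows "gcirc n 1 a $$ (i, j) = a (if i \<le> j then j - i else j + n - i)"
proof -
  have "nat ((int j - int i) mod int n) = (if i \<le> j then j - i else j + n - i)"
  proof (cases "i \<le> j")
    case False
    have "(int j - int i) mod int n = (int j - int i + int n) mod int n" by simp
    also have "\<dots> = int j - int i + int n"
      using assms False by (intro mod_pos_pos_trivial) auto
    finally show ?thesis using False assms by simp
  qed (use assms in simp)
  then show ?thesis using assms by (simp add: gcirc_def)
qed

lemma Qg_index:
  assumes "i < n" "k < n"
  shows "Qg n g $$ (i, k) = (if k = i * g mod n then 1 else 0)"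
proof -
  have "(nat ((int k - int i * int g) mod int n) = 0) \<longleftrightarrow> (int k - int i * int g) mod int n = 0"
    using assms by (simp add: nat_eq_iff)
  also have "\<dots> \<longleftrightarrow> int k mod int n = (int i * int g) mod int n"
    by (simp add: mod_eq_dvd_iff dvd_eq_mod_eq_0[symmetric])
  also have "\<dots> \<longleftrightarrow> int k = int (i * g mod n)"
    using assms by (simp add: zmod_int)
  also have "\<dots> \<longleftrightarrow> k = i * g mod n"
    by linarith
  finally show ?thesis using assms by (simp add: Qg_def gcirc_def)
qed

lemma gcirc_eq_Qg_mult: "gcirc n g a = Qg n g * gcirc n 1 a"
proof (rule eq_matI)
  fix i j assume "i < dim_row (Qg n g * gcirc n 1 a)" "j < dim_col (Qg n g * gcirc n 1 a)"
  then have i: "i < n" and j: "j < n" by simp_all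
  define k where "k = i * g mod n"
  have k: "k < n" using i unfolding k_def by simp
  have "(Qg n g * gcirc n 1 a) $$ (i, j) = (\<Sum>k'\<in>{k}. Qg n g $$ (i, k') * gcirc n 1 a $$ (k', j))"
    by (rule index_mult_mat_supported) (use i j k in \<open>auto simp: Qg_index k_def\<close>)
  also have "\<dots> = a (nat ((int j - int k) mod int n))"
    using i j k by (simp add: Qg_index k_def gcirc_def)
  also have "(int j - int k) mod int n = (int j - int i * int g) mod int n"
    unfolding k_def by (simp add: zmod_int mod_diff_right_eq)
  finally show "gcirc n g a $$ (i, j) = (Qg n g * gcirc n 1 a) $$ (i, j)"
    using i j by (simp add: gcirc_def)
qed simp_all

lemma det_gcirc: "det (gcirc n g a) = det (Qg n g) * det (gcirc n 1 a)"
  unfolding gcirc_eq_Qg_mult[of n g a] by (rule det_mult[of _ n]) (simp_all add: carrier_matI)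

text \<open>The circulant has size \<open>n = m + 2\<close>, which keeps \<open>n - 2\<close> free of truncated subtraction.\<close>
locale linrec_circulant =
  fixes x :: "nat \<Rightarrow> real" and p q :: real and m :: nat
  assumes x_1: "x 1 = 1"
    and x_rec: "\<And>k. x (k + 2) = p * x (k + 1) + q * x k"
begin

abbreviation circ :: "real mat" where
  "circ \<equiv> gcirc (m + 2) 1 (\<lambda>k. x (k + 1))"

definition \<alpha> :: real where "\<alpha> = 1 - x (m + 3)"

definition \<gamma> :: real where "\<gamma> = q * x (m + 2) + p - x 2"

definition y :: "nat \<Rightarrow> real" where "y i = x (i + 2) - x 2 * x (i + 1)"

lemma x_rec3: "x (s + 3) = p * x (s + 2) + q * x (s + 1)"
  using x_rec[of "s + 1"] by (simp add: numeral_3_eq_3)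

lemma circ_index:
  assumes "i < m + 2" "j < m + 2" "(if i \<le> j then j - i else j + (m + 2) - i) + 1 = t"
  shows "circ $$ (i, j) = x t"
  using gcirc_1_index[OF assms(1,2)] assms(3) by simp

text \<open>Rows \<open>i, i+1, i+2\<close> of the circulant are consecutive windows of the recurrent sequence,
  so this row combination vanishes except where a window wraps around.\<close>
lemma circ_row_combination:
  assumes i: "i < m" and j: "j < m + 2"
  shows "circ $$ (i, j) - p * circ $$ (i + 1, j) - q * circ $$ (i + 2, j)
    = (if j = i then \<alpha> else if j = i + 1 then - \<gamma> else 0)"
proof -
  have window: "circ $$ (i, j) - p * circ $$ (i + 1, j) - q * circ $$ (i + 2, j) = 0"
    if "circ $$ (i, j) = x (s + 3)" "circ $$ (i + 1, j) = x (s + 2)" "circ $$ (i + 2, j) = x (s + 1)"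
    for s
    using that x_rec3[of s] by simp
  consider "j = i" | "j = i + 1" | "j < i" | "i + 2 \<le> j" by linarith
  then show ?thesis
  proof cases
    case 1
    have "circ $$ (i, j) = x 1" "circ $$ (i + 1, j) = x (m + 2)" "circ $$ (i + 2, j) = x (m + 1)"
      by (rule circ_index; use 1 i in simp)+
    then show ?thesis using 1 x_1 x_rec3[of m] by (simp add: \<alpha>_def)
  next
    case 2
    have "circ $$ (i, j) = x 2" "circ $$ (i + 1, j) = x 1" "circ $$ (i + 2, j) = x (m + 2)"
      by (rule circ_index; use 2 i in simp)+
    then show ?thesis using 2 x_1 by (simp add: \<gamma>_def)
  next
    case 3
    have "circ $$ (i, j) - p * circ $$ (i + 1, j) - q * circ $$ (i + 2, j) = 0"
      by (rule window[of "j + m - i"]; rule circ_index; use 3 i in simp)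
    then show ?thesis using 3 by simp
  next
    case 4
    have "circ $$ (i, j) - p * circ $$ (i + 1, j) - q * circ $$ (i + 2, j) = 0"
      by (rule window[of "j - i - 2"]; rule circ_index; use 4 i j in simp)
    then show ?thesis using 4 by simp
  qed
qed

definition row_elim :: "real mat" where
  "row_elim = mat (m + 2) (m + 2) (\<lambda>(i, j).
     if i < m then (if j = i then 1 else if j = i + 1 then - p else if j = i + 2 then - q else 0)
     else if i = m \<and> j = m + 1 then - x 2 else if i = j then 1 else 0)"

definition reduced :: "real mat" where
  "reduced = mat (m + 2) (m + 2) (\<lambda>(i, j).
     if i < m then (if j = i then \<alpha> else if j = i + 1 then - \<gamma> else 0)
     else if i = m then (if j \<le> m then y (j + 1) + (if j = m then \<alpha> else 0) else 0)
     else if j \<le> m then x (j + 2) else 1)"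

lemma dim_row_elim [simp]: "dim_row row_elim = m + 2" "dim_col row_elim = m + 2"
  and dim_reduced [simp]: "dim_row reduced = m + 2" "dim_col reduced = m + 2"
  by (simp_all add: row_elim_def reduced_def)

lemma det_row_elim: "det row_elim = 1"
  by (rule det_unit_upper_triangular[of _ "m + 2"]) (auto simp: row_elim_def carrier_matI)

lemma circ_last_rows:
  assumes j: "j < m + 2"
  shows "circ $$ (m, j) - x 2 * circ $$ (m + 1, j) = reduced $$ (m, j)"
    and "circ $$ (m + 1, j) = reduced $$ (m + 1, j)"
proof -
  consider (left) "j < m" | (diag) "j = m" | (last) "j = m + 1" using j by linarith
  then show "circ $$ (m, j) - x 2 * circ $$ (m + 1, j) = reduced $$ (m, j)"
  proof cases
    case left
    have "circ $$ (m, j) = x (j + 3)" "circ $$ (m + 1, j) = x (j + 2)"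
      by (rule circ_index; use left in simp)+
    then show ?thesis using left by (simp add: reduced_def y_def numeral_3_eq_3)
  next
    case diag
    have "circ $$ (m, j) = x 1" "circ $$ (m + 1, j) = x (m + 2)"
      by (rule circ_index; use diag in simp)+
    then show ?thesis using diag x_1 by (simp add: reduced_def y_def \<alpha>_def numeral_3_eq_3)
  next
    case last
    have "circ $$ (m, j) = x 2" "circ $$ (m + 1, j) = x 1"
      by (rule circ_index; use last in simp)+
    then show ?thesis using last x_1 by (simp add: reduced_def)
  qed
  show "circ $$ (m + 1, j) = reduced $$ (m + 1, j)"
  proof (cases "j \<le> m")
    case True
    have "circ $$ (m + 1, j) = x (j + 2)" by (rule circ_index) (use True in simp_all)
    then show ?thesis using True by (simp add: reduced_def)
  next
    case False
    have "circ $$ (m + 1, j) = x 1" by (rule circ_index) (use False j in simp_all)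
    then show ?thesis using False j x_1 by (simp add: reduced_def)
  qed
qed

lemma row_elim_mult_circ: "row_elim * circ = reduced"
proof (rule eq_matI)
  fix i j assume "i < dim_row reduced" "j < dim_col reduced"
  then have i: "i < m + 2" and j: "j < m + 2" by (auto simp: reduced_def)
  consider "i < m" | "i = m" | "i = m + 1" using i by linarith
  then show "(row_elim * circ) $$ (i, j) = reduced $$ (i, j)"
  proof cases
    case 1
    have "(row_elim * circ) $$ (i, j) = (\<Sum>k\<in>{i, i + 1, i + 2}. row_elim $$ (i, k) * circ $$ (k, j))"
      by (rule index_mult_mat_supported) (use 1 j in \<open>auto simp: row_elim_def\<close>)
    also have "\<dots> = circ $$ (i, j) - p * circ $$ (i + 1, j) - q * circ $$ (i + 2, j)"
      using 1 by (simp add: row_elim_def)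
    also have "\<dots> = reduced $$ (i, j)"
      unfolding circ_row_combination[OF 1 j] using 1 j by (simp add: reduced_def)
    finally show ?thesis .
  next
    case 2
    have "(row_elim * circ) $$ (i, j) = (\<Sum>k\<in>{m, m + 1}. row_elim $$ (i, k) * circ $$ (k, j))"
      by (rule index_mult_mat_supported) (use 2 j in \<open>auto simp: row_elim_def\<close>)
    also have "\<dots> = circ $$ (m, j) - x 2 * circ $$ (m + 1, j)"
      using 2 by (simp add: row_elim_def)
    also have "\<dots> = reduced $$ (i, j)"
      using 2 circ_last_rows(1)[OF j] by simp
    finally show ?thesis .
  next
    case 3
    have "(row_elim * circ) $$ (i, j) = (\<Sum>k\<in>{m + 1}. row_elim $$ (i, k) * circ $$ (k, j))"
      by (rule index_mult_mat_supported) (use 3 j in \<open>auto simp: row_elim_def\<close>)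
    also have "\<dots> = circ $$ (m + 1, j)"
      using 3 by (simp add: row_elim_def)
    also have "\<dots> = reduced $$ (i, j)"
      using 3 circ_last_rows(2)[OF j] by simp
    finally show ?thesis .
  qed
qed (auto simp: row_elim_def reduced_def gcirc_def)

definition col_elim :: "real mat" where
  "col_elim = mat (m + 2) (m + 2) (\<lambda>(i, j).
     if i \<le> j \<and> j \<le> m then (\<gamma> / \<alpha>) ^ (j - i) else if i = j then 1 else 0)"

lemma dim_col_elim [simp]: "dim_row col_elim = m + 2" "dim_col col_elim = m + 2"
  by (simp_all add: col_elim_def)

lemma det_col_elim: "det col_elim = 1"
  by (rule det_unit_upper_triangular[of _ "m + 2"]) (auto simp: col_elim_def carrier_matI)

lemma reduced_mult_col_elim_upper:
  assumes "\<alpha> \<noteq> 0" "i < j" "j < m + 2"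
  shows "(reduced * col_elim) $$ (i, j) = 0"
proof (cases "i < m")
  case True
  have "(reduced * col_elim) $$ (i, j) = (\<Sum>k\<in>{i, i + 1}. reduced $$ (i, k) * col_elim $$ (k, j))"
    by (rule index_mult_mat_supported) (use True assms in \<open>auto simp: reduced_def col_elim_def\<close>)
  also have "\<dots> = \<alpha> * col_elim $$ (i, j) - \<gamma> * col_elim $$ (i + 1, j)"
    using True by (simp add: reduced_def)
  also have "\<dots> = 0"
  proof (cases "j \<le> m")
    case True
    have "j - i = Suc (j - (i + 1))" using assms(2) by simp
    then show ?thesis using True assms by (simp add: col_elim_def)
  qed (use assms True in \<open>simp add: col_elim_def\<close>)
  finally show ?thesis .
next
  case False
  have "(reduced * col_elim) $$ (i, j) = (\<Sum>k\<in>{}. reduced $$ (i, k) * col_elim $$ (k, j))"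
    by (rule index_mult_mat_supported) (use False assms in \<open>auto simp: reduced_def col_elim_def\<close>)
  then show ?thesis by simp
qed

lemma reduced_mult_col_elim_diag:
  assumes "i < m + 2"
  shows "(reduced * col_elim) $$ (i, i) =
    (if i < m then \<alpha> else if i = m then (\<Sum>k\<le>m. y (k + 1) * (\<gamma> / \<alpha>) ^ (m - k)) + \<alpha> else 1)"
proof -
  consider "i < m" | "i = m" | "i = m + 1" using assms by linarith
  then show ?thesis
  proof cases
    case 1
    have "(reduced * col_elim) $$ (i, i) = (\<Sum>k\<in>{i}. reduced $$ (i, k) * col_elim $$ (k, i))"
      by (rule index_mult_mat_supported) (use 1 in \<open>auto simp: reduced_def col_elim_def\<close>)
    then show ?thesis using 1 by (simp add: reduced_def col_elim_def)
  next
    case 2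
    have "(reduced * col_elim) $$ (i, i) = (\<Sum>k\<le>m. reduced $$ (i, k) * col_elim $$ (k, i))"
      by (rule index_mult_mat_supported) (use 2 in \<open>auto simp: reduced_def\<close>)
    also have "\<dots> = (\<Sum>k\<le>m. y (k + 1) * (\<gamma> / \<alpha>) ^ (m - k) + (if k = m then \<alpha> else 0))"
      using 2 by (intro sum.cong) (auto simp: reduced_def col_elim_def algebra_simps)
    finally show ?thesis using 2 by (simp add: sum.distrib)
  next
    case 3
    have "(reduced * col_elim) $$ (i, i) = (\<Sum>k\<in>{i}. reduced $$ (i, k) * col_elim $$ (k, i))"
      by (rule index_mult_mat_supported) (use 3 in \<open>auto simp: col_elim_def\<close>)
    then show ?thesis using 3 by (simp add: reduced_def col_elim_def)
  qed
qed

lemma det_circ_triangular: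
  assumes "\<alpha> \<noteq> 0"
  shows "det circ = \<alpha> ^ m * ((\<Sum>k\<le>m. y (k + 1) * (\<gamma> / \<alpha>) ^ (m - k)) + \<alpha>)"
proof -
  have "det circ = det (row_elim * circ * col_elim)"
    by (simp add: det_mult[of _ "m + 2"] det_row_elim det_col_elim carrier_matI)
  also have "\<dots> = (\<Prod>i<m + 2. (reduced * col_elim) $$ (i, i))"
    unfolding row_elim_mult_circ
    by (subst det_lower_triangular[of "m + 2"])
      (use reduced_mult_col_elim_upper assms in
        \<open>auto simp: prod_list_diag_prod atLeast0LessThan carrier_matI\<close>)
  also have "\<dots> = (\<Prod>i<m + 2. if i < m then \<alpha>
      else if i = m then (\<Sum>k\<le>m. y (k + 1) * (\<gamma> / \<alpha>) ^ (m - k)) + \<alpha> else 1)"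
    by (intro prod.cong) (simp_all add: reduced_mult_col_elim_diag del: index_mult_mat)
  also have "\<dots> = \<alpha> ^ m * ((\<Sum>k\<le>m. y (k + 1) * (\<gamma> / \<alpha>) ^ (m - k)) + \<alpha>)"
    by (simp add: lessThan_Suc prod.If_cases Int_absorb2 subset_eq)
  finally show ?thesis .
qed

lemma det_circ:
  assumes "\<alpha> \<noteq> 0" "\<gamma> \<noteq> 0"
  shows "det circ = \<alpha> ^ (m + 1) + \<gamma> ^ m * (\<Sum>i = 1..m + 1. y i * (\<alpha> / \<gamma>) ^ (i - 1))"
proof -
  have swap: "\<gamma> ^ m * (\<alpha> / \<gamma>) ^ k = \<alpha> ^ k * \<gamma> ^ (m - k)" if "k \<le> m" for k
    using power_mult_divide_power[of \<gamma> "m - k" m \<alpha>] assms(2) that by (simp add: mult.commute)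
  have "\<alpha> ^ m * (\<Sum>k\<le>m. y (k + 1) * (\<gamma> / \<alpha>) ^ (m - k))
    = (\<Sum>k\<le>m. y (k + 1) * (\<alpha> ^ k * \<gamma> ^ (m - k)))"
    unfolding sum_distrib_left
    by (intro sum.cong) (simp_all add: assms power_mult_divide_power algebra_simps)
  also have "\<dots> = \<gamma> ^ m * (\<Sum>k\<le>m. y (k + 1) * (\<alpha> / \<gamma>) ^ k)"
    unfolding sum_distrib_left
    by (intro sum.cong) (simp_all add: swap algebra_simps)
  also have "(\<Sum>k\<le>m. y (k + 1) * (\<alpha> / \<gamma>) ^ k) = (\<Sum>i = 1..m + 1. y i * (\<alpha> / \<gamma>) ^ (i - 1))"
    using sum.shift_bounds_cl_Suc_ivl[of "\<lambda>i. y i * (\<alpha> / \<gamma>) ^ (i - 1)" 0 m]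
    by (simp add: atMost_atLeast0)
  finally have "\<alpha> ^ m * (\<Sum>k\<le>m. y (k + 1) * (\<gamma> / \<alpha>) ^ (m - k))
    = \<gamma> ^ m * (\<Sum>i = 1..m + 1. y i * (\<alpha> / \<gamma>) ^ (i - 1))" .
  then show ?thesis
    unfolding det_circ_triangular[OF assms(1)] distrib_left by simp
qed

end

lemma fibo_lower_bounds: "1 \<le> fibo (k + 2) \<and> 2 \<le> fibo (k + 3)"
  by (induction k) (auto simp: numeral_3_eq_3 numeral_2_eq_2)

lemma lucas_lower_bounds: "3 \<le> lucas (k + 2) \<and> 4 \<le> lucas (k + 3)"
  by (induction k) (auto simp: numeral_3_eq_3 numeral_2_eq_2)

lemma pell_lower_bounds: "1 \<le> pell (k + 2) \<and> 2 \<le> pell (k + 3)"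
  by (induction k) (auto simp: numeral_3_eq_3 numeral_2_eq_2)

lemma jacobsthal_lower_bounds: "1 \<le> jacobsthal (k + 2) \<and> 2 \<le> jacobsthal (k + 3)"
  by (induction k) (auto simp: numeral_3_eq_3 numeral_2_eq_2)

lemma det_circ_fibo:
  "det (gcirc (m + 2) 1 (\<lambda>k. fibo (k + 1))) = (1 - fibo (m + 3)) ^ (m + 1) +
     fibo (m + 2) ^ m * (\<Sum>i = 1..m + 1. fibo i * ((1 - fibo (m + 3)) / fibo (m + 2)) ^ (i - 1))"
proof -
  interpret linrec_circulant fibo 1 1 m
    by unfold_locales (simp_all add: numeral_2_eq_2)
  have "\<alpha> = 1 - fibo (m + 3)" "\<gamma> = fibo (m + 2)" "y = fibo"
    by (simp_all add: \<alpha>_def \<gamma>_def y_def fun_eq_iff numeral_2_eq_2)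
  then show ?thesis using det_circ fibo_lower_bounds[of m] by simp
qed

lemma det_circ_lucas:
  "det (gcirc (m + 2) 1 (\<lambda>k. lucas (k + 1))) = (1 - lucas (m + 3)) ^ (m + 1) +
     (lucas (m + 2) - 2) ^ m * (\<Sum>i = 1..m + 1. (lucas (i + 2) - 3 * lucas (i + 1)) *
       ((1 - lucas (m + 3)) / (lucas (m + 2) - 2)) ^ (i - 1))"
proof -
  interpret linrec_circulant lucas 1 1 m
    by unfold_locales (simp_all add: numeral_2_eq_2)
  have "\<alpha> = 1 - lucas (m + 3)" "\<gamma> = lucas (m + 2) - 2" "y = (\<lambda>i. lucas (i + 2) - 3 * lucas (i + 1))"
    by (simp_all add: \<alpha>_def \<gamma>_def y_def fun_eq_iff numeral_2_eq_2)
  then show ?thesis using det_circ lucas_lower_bounds[of m] by simp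
qed

lemma det_circ_pell:
  "det (gcirc (m + 2) 1 (\<lambda>k. pell (k + 1))) = (1 - pell (m + 3)) ^ (m + 1) +
     pell (m + 2) ^ m * (\<Sum>i = 1..m + 1. pell i * ((1 - pell (m + 3)) / pell (m + 2)) ^ (i - 1))"
proof -
  interpret linrec_circulant pell 2 1 m
    by unfold_locales (simp_all add: numeral_2_eq_2)
  have "\<alpha> = 1 - pell (m + 3)" "\<gamma> = pell (m + 2)" "y = pell"
    by (simp_all add: \<alpha>_def \<gamma>_def y_def fun_eq_iff numeral_2_eq_2)
  then show ?thesis using det_circ pell_lower_bounds[of m] by simp
qed

lemma det_circ_jacobsthal:
  "det (gcirc (m + 2) 1 (\<lambda>k. jacobsthal (k + 1))) = (1 - jacobsthal (m + 3)) ^ (m + 1) +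
     2 ^ (m + 1) * jacobsthal (m + 2) ^ m * (\<Sum>i = 1..m + 1. jacobsthal i *
       ((1 - jacobsthal (m + 3)) / (2 * jacobsthal (m + 2))) ^ (i - 1))"
proof -
  interpret linrec_circulant jacobsthal 1 2 m
    by unfold_locales (simp_all add: numeral_2_eq_2)
  have \<alpha>: "\<alpha> = 1 - jacobsthal (m + 3)" and \<gamma>: "\<gamma> = 2 * jacobsthal (m + 2)"
    and y: "y i = 2 * jacobsthal i" for i
    by (simp_all add: \<alpha>_def \<gamma>_def y_def numeral_2_eq_2)
  have scale: "(2 * a) ^ m * (\<Sum>i\<in>I. 2 * f i * t i) = 2 ^ (m + 1) * a ^ m * (\<Sum>i\<in>I. f i * t i)"
    for a :: real and f t :: "nat \<Rightarrow> real" and I :: "nat set"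
    by (simp add: power_mult_distrib sum_distrib_left mult_ac)
  have "\<alpha> \<noteq> 0" "\<gamma> \<noteq> 0" using jacobsthal_lower_bounds[of m] by (simp_all add: \<alpha> \<gamma>)
  from det_circ[OF this] show ?thesis unfolding \<alpha> \<gamma> y scale .
qed

theorem mainTheorem4:
  fixes n g :: nat
  assumes "n \<ge> 2" and "coprime n g"
  shows "(det (gcirc n g (\<lambda>k. fibo (k + 1))) = det (Qg n g) *
           ((1 - fibo (n + 1)) ^ (n - 1) + fibo n ^ (n - 2) *
             (\<Sum>i = 1..n - 1. fibo i * ((1 - fibo (n + 1)) / fibo n) ^ (i - 1)))) \<and>
        (det (gcirc n g (\<lambda>k. lucas (k + 1))) = det (Qg n g) *
           ((1 - lucas (n + 1)) ^ (n - 1) + (lucas n - 2) ^ (n - 2) *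
             (\<Sum>i = 1..n - 1. (lucas (i + 2) - 3 * lucas (i + 1)) *
                ((1 - lucas (n + 1)) / (lucas n - 2)) ^ (i - 1)))) \<and>
        (det (gcirc n g (\<lambda>k. pell (k + 1))) = det (Qg n g) *
           ((1 - pell (n + 1)) ^ (n - 1) + pell n ^ (n - 2) *
             (\<Sum>i = 1..n - 1. pell i * ((1 - pell (n + 1)) / pell n) ^ (i - 1)))) \<and>
        (det (gcirc n g (\<lambda>k. jacobsthal (k + 1))) = det (Qg n g) *
           ((1 - jacobsthal (n + 1)) ^ (n - 1) + 2 ^ (n - 1) * jacobsthal n ^ (n - 2) *
             (\<Sum>i = 1..n - 1. jacobsthal i *
                ((1 - jacobsthal (n + 1)) / (2 * jacobsthal n)) ^ (i - 1))))"
proof -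
  obtain m where n: "n = m + 2" using assms(1) by (metis le_add_diff_inverse2)
  have index_shifts: "m + 2 + 1 = m + 3" "m + 2 - 1 = m + 1" "m + 2 - 2 = m" by simp_all
  show ?thesis
    unfolding det_gcirc[of _ g] n index_shifts
    by (simp only: det_circ_fibo det_circ_lucas det_circ_pell det_circ_jacobsthal)
qed

end
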